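(* Let $S=(G,P,\Lambda,I)$ be a completely simple semigroup whose sandwich matrix $P$ is singular (i.e. $P$ has two equal rows or two equal columns). Then $S$ is not an equational domain in the language $\mathcal{L}_S$.
   Context: Rees representation: a completely simple (c.s.) semigroup $S=(G,P,\Lambda,I)$ is given by a group $G$, index sets $\Lambda,I$ (each containing an element $1$), and a matrix $P=(p_{i\lambda})_{i\in I,\lambda\in\Lambda}$ over $G$ normalised so that $p_{1\lambda}=p_{i1}=1_G$; elements are triples $(\lambda,g,i)$ with product $(\lambda,g,i)(\mu,h,j)=(\lambda,gp_{i\mu}h,j)$ and inversion $(\lambda,g,i)^{-1}=(\lambda,p_{i\lambda}^{-1}g^{-1}p_{i\lambda}^{-1},i)$. $P$ is non-singular if it has no two equal rows and no two equal columns. The language $\mathcal{L}_S$ is $\{\cdot,{}^{-1}\}$ together with a constant for each element of $S$; terms are built from variables and constants using products and ${}^{-1}$. An equation is an equality $t(X)=s(X)$ of two terms; a system is any set of equations; its solution set in $S^n$ is the set of points satisfying all of them; a subset of $S^n$ is algebraic if it is the solution set of some system. $S$ is an equational domain (e.d.) in $\mathcal{L}_S$ if every finite union of algebraic sets (in $S^n$, any $n$) is algebraic. *)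

theory Defs
  imports "HOL-Algebra.Group"
begin

text \<open>The sandwich matrix is P :: 'i => 'l => 'g, with entry P i lambda = p_{i lambda}.\<close>

definition rees_carrier :: "('g,'b) monoid_scheme \<Rightarrow> 'l set \<Rightarrow> 'i set \<Rightarrow> ('l \<times> 'g \<times> 'i) set" where
  "rees_carrier G L I = L \<times> carrier G \<times> I"

definition rees_mult :: "('g,'b) monoid_scheme \<Rightarrow> ('i \<Rightarrow> 'l \<Rightarrow> 'g) \<Rightarrow>
    ('l \<times> 'g \<times> 'i) \<Rightarrow> ('l \<times> 'g \<times> 'i) \<Rightarrow> ('l \<times> 'g \<times> 'i)" where
  "rees_mult G P x y = (case x of (l, g, i) \<Rightarrow> case y of (m, h, j) \<Rightarrow>
      (l, g \<otimes>\<^bsub>G\<^esub> P i m \<otimes>\<^bsub>G\<^esub> h, j))"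

definition rees_inv :: "('g,'b) monoid_scheme \<Rightarrow> ('i \<Rightarrow> 'l \<Rightarrow> 'g) \<Rightarrow>
    ('l \<times> 'g \<times> 'i) \<Rightarrow> ('l \<times> 'g \<times> 'i)" where
  "rees_inv G P x = (case x of (l, g, i) \<Rightarrow>
      (l, inv\<^bsub>G\<^esub> (P i l) \<otimes>\<^bsub>G\<^esub> inv\<^bsub>G\<^esub> g \<otimes>\<^bsub>G\<^esub> inv\<^bsub>G\<^esub> (P i l), i))"

datatype 'c trm = Var nat | Cst 'c | Mul "'c trm" "'c trm" | Inv "'c trm"

fun trm_eval :: "('g,'b) monoid_scheme \<Rightarrow> ('i \<Rightarrow> 'l \<Rightarrow> 'g) \<Rightarrow>
    ('l \<times> 'g \<times> 'i) list \<Rightarrow> ('l \<times> 'g \<times> 'i) trm \<Rightarrow> ('l \<times> 'g \<times> 'i)" where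
  "trm_eval G P xs (Var k) = xs ! k"
| "trm_eval G P xs (Cst c) = c"
| "trm_eval G P xs (Mul t s) = rees_mult G P (trm_eval G P xs t) (trm_eval G P xs s)"
| "trm_eval G P xs (Inv t) = rees_inv G P (trm_eval G P xs t)"

fun wf_trm :: "'c set \<Rightarrow> nat \<Rightarrow> 'c trm \<Rightarrow> bool" where
  "wf_trm S n (Var k) = (k < n)"
| "wf_trm S n (Cst c) = (c \<in> S)"
| "wf_trm S n (Mul t s) = (wf_trm S n t \<and> wf_trm S n s)"
| "wf_trm S n (Inv t) = wf_trm S n t"

definition solution_set :: "('g,'b) monoid_scheme \<Rightarrow> ('i \<Rightarrow> 'l \<Rightarrow> 'g) \<Rightarrow> 'l set \<Rightarrow> 'i set \<Rightarrow>
    nat \<Rightarrow> (('l \<times> 'g \<times> 'i) trm \<times> ('l \<times> 'g \<times> 'i) trm) set \<Rightarrow> ('l \<times> 'g \<times> 'i) list set" where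
  "solution_set G P L I n E = {xs. length xs = n \<and> set xs \<subseteq> rees_carrier G L I \<and>
      (\<forall>(t, s) \<in> E. trm_eval G P xs t = trm_eval G P xs s)}"

definition algebraic_set :: "('g,'b) monoid_scheme \<Rightarrow> ('i \<Rightarrow> 'l \<Rightarrow> 'g) \<Rightarrow> 'l set \<Rightarrow> 'i set \<Rightarrow>
    nat \<Rightarrow> ('l \<times> 'g \<times> 'i) list set \<Rightarrow> bool" where
  "algebraic_set G P L I n A \<longleftrightarrow>
     (\<exists>E. (\<forall>(t, s) \<in> E. wf_trm (rees_carrier G L I) n t \<and> wf_trm (rees_carrier G L I) n s)
          \<and> A = solution_set G P L I n E)"

definition equational_domain :: "('g,'b) monoid_scheme \<Rightarrow> ('i \<Rightarrow> 'l \<Rightarrow> 'g) \<Rightarrow> 'l set \<Rightarrow> 'i set \<Rightarrow> bool" where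
  "equational_domain G P L I \<longleftrightarrow>
     (\<forall>n F. finite F \<and> (\<forall>A \<in> F. algebraic_set G P L I n A) \<longrightarrow> algebraic_set G P L I n (\<Union>F))"

definition rees_matrix :: "('g,'b) monoid_scheme \<Rightarrow> ('i \<Rightarrow> 'l \<Rightarrow> 'g) \<Rightarrow> 'l set \<Rightarrow> 'i set \<Rightarrow> 'l \<Rightarrow> 'i \<Rightarrow> bool" where
  "rees_matrix G P L I l1 i1 \<longleftrightarrow> l1 \<in> L \<and> i1 \<in> I \<and>
     (\<forall>i\<in>I. \<forall>l\<in>L. P i l \<in> carrier G) \<and>
     (\<forall>l\<in>L. P i1 l = \<one>\<^bsub>G\<^esub>) \<and> (\<forall>i\<in>I. P i l1 = \<one>\<^bsub>G\<^esub>)"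

definition singular_matrix :: "('i \<Rightarrow> 'l \<Rightarrow> 'g) \<Rightarrow> 'l set \<Rightarrow> 'i set \<Rightarrow> bool" where
  "singular_matrix P L I \<longleftrightarrow>
     (\<exists>i\<in>I. \<exists>j\<in>I. i \<noteq> j \<and> (\<forall>l\<in>L. P i l = P j l)) \<or>
     (\<exists>l\<in>L. \<exists>m\<in>L. l \<noteq> m \<and> (\<forall>i\<in>I. P i l = P i m))"

end

theory Submission
  imports Defs
begin

(* Let a and b be distinct elements of S and consider the two algebraic
   subsets {x0 = a} and {x1 = a} of S^2.  Their union contains [a,b] and [b,a] but not
   [b,b]; so if every equation satisfied at [a,b] and at [b,a] is also satisfied at
   [b,b], the union is not algebraic and S is not an equational domain.
   If two columns l, m of P coincide, collapsing the Lambda-index m onto l is an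
   endomorphism of S; it identifies a = (l,1,i1) with b = (m,1,i1).  Hence for a term t
   the value at [b,b] agrees with the value at [a,b] up to the Lambda-coordinate, and the
   Lambda-coordinate of a product is that of its leftmost factor, which is a variable or
   a constant; a short case analysis on these leftmost leaves finishes the transfer.
   Two equal rows are handled dually, collapsing I-indices and using rightmost leaves. *)

lemma rees_mult_triple [simp]:
  "rees_mult G P (a, g, i) (b, h, j) = (a, g \<otimes>\<^bsub>G\<^esub> P i b \<otimes>\<^bsub>G\<^esub> h, j)"
  by (simp add: rees_mult_def)

lemma rees_inv_triple [simp]:
  "rees_inv G P (a, g, i) =
     (a, inv\<^bsub>G\<^esub> (P i a) \<otimes>\<^bsub>G\<^esub> inv\<^bsub>G\<^esub> g \<otimes>\<^bsub>G\<^esub> inv\<^bsub>G\<^esub> (P i a), i)"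
  by (simp add: rees_inv_def)

lemma rees_mult_closed:
  assumes "group G" and entries: "\<forall>i\<in>I. \<forall>l\<in>L. P i l \<in> carrier G"
    and "x \<in> rees_carrier G L I" and "y \<in> rees_carrier G L I"
  shows "rees_mult G P x y \<in> rees_carrier G L I"
proof -
  interpret group G by fact
  show ?thesis using assms(3,4) entries by (auto simp: rees_carrier_def)
qed

lemma rees_inv_closed:
  assumes "group G" and entries: "\<forall>i\<in>I. \<forall>l\<in>L. P i l \<in> carrier G"
    and "x \<in> rees_carrier G L I"
  shows "rees_inv G P x \<in> rees_carrier G L I"
proof -
  interpret group G by fact
  show ?thesis using assms(3) entries by (auto simp: rees_carrier_def)
qed

lemma trm_eval_closed:
  assumes "group G" and entries: "\<forall>i\<in>I. \<forall>l\<in>L. P i l \<in> carrier G"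
    and "wf_trm (rees_carrier G L I) n t" and "length xs = n" and "set xs \<subseteq> rees_carrier G L I"
  shows "trm_eval G P xs t \<in> rees_carrier G L I"
  using assms(3)
  by (induction t) (use assms(4,5) in \<open>auto intro: rees_mult_closed[OF assms(1,2)]
      rees_inv_closed[OF assms(1,2)] dest: nth_mem\<close>)

lemma coordinate_set_algebraic:
  assumes "k < 2" and "a \<in> rees_carrier G L I"
  shows "algebraic_set G P L I 2 (solution_set G P L I 2 {(Var k, Cst a)})"
  unfolding algebraic_set_def
  by (rule exI[of _ "{(Var k, Cst a)}"]) (use assms in simp)

lemma not_equational_domain_if_two_point_transfer:
  assumes C: "a \<in> rees_carrier G L I" "b \<in> rees_carrier G L I" and "a \<noteq> b"
    and transfer: "\<And>t s. wf_trm (rees_carrier G L I) 2 t \<Longrightarrow> wf_trm (rees_carrier G L I) 2 s \<Longrightarrow>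
        trm_eval G P [a, b] t = trm_eval G P [a, b] s \<Longrightarrow>
        trm_eval G P [b, a] t = trm_eval G P [b, a] s \<Longrightarrow>
        trm_eval G P [b, b] t = trm_eval G P [b, b] s"
  shows "\<not> equational_domain G P L I"
proof
  assume "equational_domain G P L I"
  define A where "A k = solution_set G P L I 2 {(Var k, Cst a)}" for k
  have alg: "algebraic_set G P L I 2 (A 0)" "algebraic_set G P L I 2 (A 1)"
    unfolding A_def by (rule coordinate_set_algebraic[OF _ C(1)], simp)+
  have "\<forall>F. finite F \<and> (\<forall>X \<in> F. algebraic_set G P L I 2 X) \<longrightarrow>
      algebraic_set G P L I 2 (\<Union>F)"
    using \<open>equational_domain G P L I\<close> unfolding equational_domain_def by (rule spec)
  from this[rule_format, of "{A 0, A 1}"] alg have "algebraic_set G P L I 2 (A 0 \<union> A 1)"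
    by simp
  then obtain E where wfE: "\<forall>(t, s) \<in> E. wf_trm (rees_carrier G L I) 2 t \<and> wf_trm (rees_carrier G L I) 2 s"
      and union: "A 0 \<union> A 1 = solution_set G P L I 2 E"
    unfolding algebraic_set_def by blast
  have "[a, b] \<in> A 0" "[b, a] \<in> A 1" and "[b, b] \<notin> A 0 \<union> A 1"
    using C \<open>a \<noteq> b\<close> by (auto simp: A_def solution_set_def)
  then have at_ab: "[a, b] \<in> solution_set G P L I 2 E" and at_ba: "[b, a] \<in> solution_set G P L I 2 E"
    and not_bb: "[b, b] \<notin> solution_set G P L I 2 E"
    by (simp_all add: union[symmetric])
  have "trm_eval G P [b, b] t = trm_eval G P [b, b] s" if "(t, s) \<in> E" for t s
    using at_ab at_ba wfE that by (intro transfer) (auto simp: solution_set_def)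
  with C have "[b, b] \<in> solution_set G P L I 2 E"
    by (auto simp: solution_set_def)
  with not_bb show False ..
qed

lemma trm_eval_hom:
  assumes "group G" and entries: "\<forall>i\<in>I. \<forall>l\<in>L. P i l \<in> carrier G"
    and hom_mult: "\<And>x y. x \<in> rees_carrier G L I \<Longrightarrow> y \<in> rees_carrier G L I \<Longrightarrow>
        \<phi> (rees_mult G P x y) = rees_mult G P (\<phi> x) (\<phi> y)"
    and hom_inv: "\<And>x. x \<in> rees_carrier G L I \<Longrightarrow> \<phi> (rees_inv G P x) = rees_inv G P (\<phi> x)"
    and wf: "wf_trm (rees_carrier G L I) n t"
    and xs: "length xs = n" "set xs \<subseteq> rees_carrier G L I"
  shows "\<phi> (trm_eval G P xs t) = trm_eval G P (map \<phi> xs) (map_trm \<phi> t)"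
  using wf
proof (induction t)
  case (Mul t s)
  then show ?case
    using hom_mult trm_eval_closed[OF assms(1,2) _ xs] by simp
next
  case (Inv t)
  then show ?case
    using hom_inv trm_eval_closed[OF assms(1,2) _ xs] by simp
qed (use xs in simp_all)

text \<open>The Lambda-coordinate of a product is that of its left factor, the I-coordinate that of
  its right factor, and inversion preserves both.\<close>

fun left_leaf :: "'c trm \<Rightarrow> 'c trm" where
  "left_leaf (Mul t s) = left_leaf t"
| "left_leaf (Inv t) = left_leaf t"
| "left_leaf t = t"

fun right_leaf :: "'c trm \<Rightarrow> 'c trm" where
  "right_leaf (Mul t s) = right_leaf s"
| "right_leaf (Inv t) = right_leaf t"
| "right_leaf t = t"

lemma fst_trm_eval_left_leaf:
  "fst (trm_eval G P xs t) = fst (trm_eval G P xs (left_leaf t))"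
  by (induction t) (auto simp: rees_mult_def rees_inv_def split: prod.splits)

lemma index_trm_eval_right_leaf:
  "snd (snd (trm_eval G P xs t)) = snd (snd (trm_eval G P xs (right_leaf t)))"
  by (induction t) (auto simp: rees_mult_def rees_inv_def split: prod.splits)

definition leaves2 :: "'c set \<Rightarrow> 'c trm set" where
  "leaves2 C = {Var 0, Var 1} \<union> Cst ` C"

lemma left_leaf_in_leaves2: "wf_trm C 2 t \<Longrightarrow> left_leaf t \<in> leaves2 C"
  by (induction t) (auto simp: leaves2_def less_2_cases_iff)

lemma right_leaf_in_leaves2: "wf_trm C 2 t \<Longrightarrow> right_leaf t \<in> leaves2 C"
  by (induction t) (auto simp: leaves2_def less_2_cases_iff)

text \<open>Key combinatorial fact: any property of a pair of leaves that holds at [a,b] and at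
  [b,a] also holds at [b,b].  (Two variables both evaluate to b there; a variable against a
  constant is tested at the point where the variable is b; two constants at any point.)\<close>

lemma leaves_agree_at_diagonal:
  assumes "u \<in> leaves2 C" "w \<in> leaves2 C"
    and "\<kappa> (trm_eval G P [a, b] u) = \<kappa> (trm_eval G P [a, b] w)"
    and "\<kappa> (trm_eval G P [b, a] u) = \<kappa> (trm_eval G P [b, a] w)"
  shows "\<kappa> (trm_eval G P [b, b] u) = \<kappa> (trm_eval G P [b, b] w)"
  using assms by (auto simp: leaves2_def)

text \<open>Suppose an endomorphism \<phi> of S identifies a with b, and together with a coordinate \<kappa>
  (computed from a leaf of the term) determines each element.  Then every equation holding
  at [a,b] and at [b,a] holds at [b,b]: \<phi> cannot tell [b,b] from [a,b], and \<kappa> is handled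
  by the leaf lemma.\<close>

lemma collapse_transfer:
  assumes "group G" and entries: "\<forall>i\<in>I. \<forall>l\<in>L. P i l \<in> carrier G"
    and hom_mult: "\<And>x y. x \<in> rees_carrier G L I \<Longrightarrow> y \<in> rees_carrier G L I \<Longrightarrow>
        \<phi> (rees_mult G P x y) = rees_mult G P (\<phi> x) (\<phi> y)"
    and hom_inv: "\<And>x. x \<in> rees_carrier G L I \<Longrightarrow> \<phi> (rees_inv G P x) = rees_inv G P (\<phi> x)"
    and separates: "\<And>x y. \<phi> x = \<phi> y \<Longrightarrow> \<kappa> x = \<kappa> y \<Longrightarrow> x = y"
    and leaf_eval: "\<And>xs u. \<kappa> (trm_eval G P xs u) = \<kappa> (trm_eval G P xs (leaf u))"
    and leaf_shape: "\<And>u. wf_trm (rees_carrier G L I) 2 u \<Longrightarrow> leaf u \<in> leaves2 (rees_carrier G L I)"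
    and ab: "a \<in> rees_carrier G L I" "b \<in> rees_carrier G L I" "\<phi> a = \<phi> b"
    and wf: "wf_trm (rees_carrier G L I) 2 t" "wf_trm (rees_carrier G L I) 2 s"
    and eq_ab: "trm_eval G P [a, b] t = trm_eval G P [a, b] s"
    and eq_ba: "trm_eval G P [b, a] t = trm_eval G P [b, a] s"
  shows "trm_eval G P [b, b] t = trm_eval G P [b, b] s"
proof (rule separates)
  have collapse: "\<phi> (trm_eval G P [b, b] u) = \<phi> (trm_eval G P [a, b] u)"
    if "wf_trm (rees_carrier G L I) 2 u" for u
    using trm_eval_hom[OF assms(1-4) that, of "[b, b]"] trm_eval_hom[OF assms(1-4) that, of "[a, b]"]
      ab by simp
  show "\<phi> (trm_eval G P [b, b] t) = \<phi> (trm_eval G P [b, b] s)"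
    using collapse[OF wf(1)] collapse[OF wf(2)] eq_ab by simp
  show "\<kappa> (trm_eval G P [b, b] t) = \<kappa> (trm_eval G P [b, b] s)"
    using leaves_agree_at_diagonal[OF leaf_shape[OF wf(1)] leaf_shape[OF wf(2)], of \<kappa> G P a b]
      eq_ab eq_ba by (simp only: leaf_eval[symmetric])
qed

text \<open>If columns l and m of P are equal, replacing the Lambda-index m by l is an endomorphism
  of S, because the sandwich entries P i m and P i l coincide.\<close>

definition merge_columns :: "'l \<Rightarrow> 'l \<Rightarrow> 'l \<times> 'g \<times> 'i \<Rightarrow> 'l \<times> 'g \<times> 'i" where
  "merge_columns l m = (\<lambda>(k, g, i). (if k = m then l else k, g, i))"

lemma merge_columns_mult:
  assumes "\<forall>i\<in>I. P i l = P i m" and "x \<in> rees_carrier G L I"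
  shows "merge_columns l m (rees_mult G P x y) =
    rees_mult G P (merge_columns l m x) (merge_columns l m y)"
  using assms by (auto simp: merge_columns_def rees_carrier_def rees_mult_def split: prod.splits)

lemma merge_columns_inv:
  assumes "\<forall>i\<in>I. P i l = P i m" and "x \<in> rees_carrier G L I"
  shows "merge_columns l m (rees_inv G P x) = rees_inv G P (merge_columns l m x)"
  using assms by (auto simp: merge_columns_def rees_carrier_def rees_inv_def split: prod.splits)

definition merge_rows :: "'i \<Rightarrow> 'i \<Rightarrow> 'l \<times> 'g \<times> 'i \<Rightarrow> 'l \<times> 'g \<times> 'i" where
  "merge_rows i j = (\<lambda>(l, g, k). (l, g, if k = j then i else k))"

lemma merge_rows_mult:
  assumes "\<forall>l\<in>L. P i l = P j l" and "y \<in> rees_carrier G L I"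
  shows "merge_rows i j (rees_mult G P x y) = rees_mult G P (merge_rows i j x) (merge_rows i j y)"
  using assms by (auto simp: merge_rows_def rees_carrier_def rees_mult_def split: prod.splits)

lemma merge_rows_inv:
  assumes "\<forall>l\<in>L. P i l = P j l" and "x \<in> rees_carrier G L I"
  shows "merge_rows i j (rees_inv G P x) = rees_inv G P (merge_rows i j x)"
  using assms by (auto simp: merge_rows_def rees_carrier_def rees_inv_def split: prod.splits)

lemma equal_columns_not_equational_domain:
  assumes "group G" and entries: "\<forall>i\<in>I. \<forall>l\<in>L. P i l \<in> carrier G" and "i1 \<in> I"
    and "l \<in> L" "m \<in> L" "l \<noteq> m" and columns: "\<forall>i\<in>I. P i l = P i m"
  shows "\<not> equational_domain G P L I"
proof -
  let ?a = "(l, \<one>\<^bsub>G\<^esub>, i1)" and ?b = "(m, \<one>\<^bsub>G\<^esub>, i1)"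
  have ab: "?a \<in> rees_carrier G L I" "?b \<in> rees_carrier G L I" "?a \<noteq> ?b"
    using assms monoid.one_closed[OF group.is_monoid] by (auto simp: rees_carrier_def)
  have "merge_columns l m ?a = merge_columns l m ?b"
    by (simp add: merge_columns_def)
  with columns show ?thesis
    by (intro not_equational_domain_if_two_point_transfer[OF ab]
        collapse_transfer[OF assms(1) entries merge_columns_mult merge_columns_inv _
          fst_trm_eval_left_leaf left_leaf_in_leaves2])
      (use ab in \<open>auto simp: merge_columns_def prod_eq_iff\<close>)
qed

lemma equal_rows_not_equational_domain:
  assumes "group G" and entries: "\<forall>i\<in>I. \<forall>l\<in>L. P i l \<in> carrier G" and "l1 \<in> L"
    and "i \<in> I" "j \<in> I" "i \<noteq> j" and rows: "\<forall>l\<in>L. P i l = P j l"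
  shows "\<not> equational_domain G P L I"
proof -
  let ?a = "(l1, \<one>\<^bsub>G\<^esub>, i)" and ?b = "(l1, \<one>\<^bsub>G\<^esub>, j)"
  have ab: "?a \<in> rees_carrier G L I" "?b \<in> rees_carrier G L I" "?a \<noteq> ?b"
    using assms monoid.one_closed[OF group.is_monoid] by (auto simp: rees_carrier_def)
  have "merge_rows i j ?a = merge_rows i j ?b"
    by (simp add: merge_rows_def)
  with rows show ?thesis
    by (intro not_equational_domain_if_two_point_transfer[OF ab]
        collapse_transfer[OF assms(1) entries merge_rows_mult merge_rows_inv _
          index_trm_eval_right_leaf right_leaf_in_leaves2])
      (use ab in \<open>auto simp: merge_rows_def prod_eq_iff\<close>)
qed

theorem mainTheorem2:
  fixes G :: "('g, 'b) monoid_scheme" and P :: "'i \<Rightarrow> 'l \<Rightarrow> 'g"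
    and L :: "'l set" and I :: "'i set" and l1 :: 'l and i1 :: 'i
  assumes "group G"
    and "rees_matrix G P L I l1 i1"
    and "singular_matrix P L I"
  shows "\<not> equational_domain G P L I"
proof -
  have entries: "\<forall>i\<in>I. \<forall>l\<in>L. P i l \<in> carrier G" and "l1 \<in> L" "i1 \<in> I"
    using assms(2) by (auto simp: rees_matrix_def)
  from assms(3) consider
      (rows) i j where "i \<in> I" "j \<in> I" "i \<noteq> j" "\<forall>l\<in>L. P i l = P j l"
    | (columns) l m where "l \<in> L" "m \<in> L" "l \<noteq> m" "\<forall>i\<in>I. P i l = P i m"
    unfolding singular_matrix_def by blast
  then show ?thesis
  proof cases
    case rows
    then show ?thesis
      by (rule equal_rows_not_equational_domain[OF assms(1) entries \<open>l1 \<in> L\<close>])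
  next
    case columns
    then show ?thesis
      by (rule equal_columns_not_equational_domain[OF assms(1) entries \<open>i1 \<in> I\<close>])
  qed
qed

end
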